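(* Let $A,B\in\mathrm{SL}_2\mathbb{Z}$ be noncommuting, well oriented, with $2\le\mathrm{tr}(A)<\mathrm{tr}(B)$ and $\mathrm{tr}(AB)>\mathrm{tr}(B^2)$. Then the integers $\mathrm{tr}((AB)^3)$ and $\mathrm{tr}((AB^2)^2)$ differ by at least $2$.
   Context: Fixed points are for the Möbius action on $\partial\mathcal{H}=\mathbb{P}^1\mathbb{R}$; $\alpha^\pm$ ($\beta^\pm$) are the attracting/repelling fixed points of $A$ ($B$), both equal to the unique fixed point if parabolic. With $\partial\mathcal{H}$ cyclically ordered and $[\alpha,\beta]$ the closed counterclockwise interval from $\alpha$ to $\beta$, let $I^+=\{\alpha^+\}$ if $\alpha^+=\beta^+$, and otherwise the one of $[\alpha^+,\beta^+],[\beta^+,\alpha^+]$ mapped into itself by both $A$ and $B$ (if it exists); define $I^-$ likewise with $A^{-1},B^{-1},\alpha^-,\beta^-$. The pair is coherently oriented if both exist, and well oriented if $A,B$ is coherently oriented but $A,B^{-1}$ is not. *)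

theory Defs
  imports "HOL-Analysis.Analysis"
begin

text \<open>Points of the circle at infinity P^1(R) = R \<union> {\<infinity>}: Some x is the real
  point x, None is \<infinity>.\<close>
type_synonym pt = "real option"

definition rmat :: "int^2^2 \<Rightarrow> real^2^2" where
  "rmat A = (\<chi> i j. real_of_int (A$i$j))"

definition mob :: "real^2^2 \<Rightarrow> pt \<Rightarrow> pt" where
  "mob M p = (case p of
      Some x \<Rightarrow> (if M$2$1 * x + M$2$2 = 0 then None
                 else Some ((M$1$1 * x + M$1$2) / (M$2$1 * x + M$2$2)))
    | None \<Rightarrow> (if M$2$1 = 0 then None else Some (M$1$1 / M$2$1)))"

definition pvec :: "pt \<Rightarrow> real^2" where
  "pvec p = (case p of Some x \<Rightarrow> vector [x, 1] | None \<Rightarrow> vector [1, 0])"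

text \<open>Attracting fixed point: fixed point whose eigenvalue (multiplier of the line)
  has absolute value \<ge> 1 (for det 1: the eigenvalue \<lambda> > 1 in the hyperbolic case,
  the unique fixed point in the parabolic case).\<close>
definition attracting_fp :: "real^2^2 \<Rightarrow> pt" where
  "attracting_fp M = (THE p. mob M p = p \<and>
      (\<exists>l. \<bar>l\<bar> \<ge> 1 \<and> M *v pvec p = l *s pvec p))"

definition repelling_fp :: "real^2^2 \<Rightarrow> pt" where
  "repelling_fp M = (THE p. mob M p = p \<and>
      (\<exists>l. \<bar>l\<bar> \<le> 1 \<and> M *v pvec p = l *s pvec p))"

text \<open>Going up in this order and wrapping from \<infinity> back to -\<infinity> is the
  counterclockwise direction on \<partial>H.\<close>
definition pt_le :: "pt \<Rightarrow> pt \<Rightarrow> bool" where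
  "pt_le p q = (case (p, q) of
      (_, None) \<Rightarrow> True
    | (None, Some _) \<Rightarrow> False
    | (Some x, Some y) \<Rightarrow> x \<le> y)"

definition ccw_interval :: "pt \<Rightarrow> pt \<Rightarrow> pt set" where
  "ccw_interval a b = (if pt_le a b then {x. pt_le a x \<and> pt_le x b}
                        else {x. pt_le a x \<or> pt_le x b})"

definition invariant_under :: "real^2^2 \<Rightarrow> pt set \<Rightarrow> bool" where
  "invariant_under M I \<longleftrightarrow> mob M ` I \<subseteq> I"

definition I_plus_exists :: "real^2^2 \<Rightarrow> real^2^2 \<Rightarrow> bool" where
  "I_plus_exists A B \<longleftrightarrow>
     (let a = attracting_fp A; b = attracting_fp B in
      a = b \<or> (\<exists>I \<in> {ccw_interval a b, ccw_interval b a}.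
                  invariant_under A I \<and> invariant_under B I))"

definition I_minus_exists :: "real^2^2 \<Rightarrow> real^2^2 \<Rightarrow> bool" where
  "I_minus_exists A B \<longleftrightarrow>
     (let a = repelling_fp A; b = repelling_fp B in
      a = b \<or> (\<exists>I \<in> {ccw_interval a b, ccw_interval b a}.
                  invariant_under (matrix_inv A) I \<and> invariant_under (matrix_inv B) I))"

definition coherently_oriented :: "real^2^2 \<Rightarrow> real^2^2 \<Rightarrow> bool" where
  "coherently_oriented A B \<longleftrightarrow> I_plus_exists A B \<and> I_minus_exists A B"

definition well_oriented :: "real^2^2 \<Rightarrow> real^2^2 \<Rightarrow> bool" where
  "well_oriented A B \<longleftrightarrow> coherently_oriented A B \<and> \<not> coherently_oriented A (matrix_inv B)"

end

theory Submission
  imports Defs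
begin

text \<open>With \<open>a = tr A\<close>, \<open>b = tr B\<close>, \<open>c = tr AB\<close>, the trace identities for \<open>SL\<^sub>2\<close> give
  \<open>tr((AB)\<^sup>3) = c\<^sup>3 - 3c\<close> and \<open>tr((AB\<^sup>2)\<^sup>2) = (bc - a)\<^sup>2 - 2\<close>, while \<open>tr(AB) > tr(B\<^sup>2)\<close>
  means \<open>c \<ge> b\<^sup>2 - 1\<close>. The difference of the two traces equals
  \<open>c\<^sup>2(c - b\<^sup>2) + c(2ab - 3) + 2 - a\<^sup>2\<close>, which is at least \<open>2\<close> when \<open>c \<ge> b\<^sup>2\<close>, and for
  \<open>c = b\<^sup>2 - 1\<close> equals \<open>cm + 2 - a\<^sup>2\<close> with \<open>m = 2ab - b\<^sup>2 - 2\<close>, which avoids \<open>{-1,0,1}\<close>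
  whatever the integer \<open>m\<close> is.\<close>

lemma trace_2: "trace (M :: 'a::comm_ring_1^2^2) = M$1$1 + M$2$2"
  by (simp add: trace_def sum_2)

lemma trace_mult_square_2:
  fixes X Y :: "'a::comm_ring_1^2^2"
  shows "trace (X ** Y ** Y) = trace Y * trace (X ** Y) - det Y * trace X"
  by (simp add: trace_2 det_2 matrix_matrix_mult_def sum_2 algebra_simps)

lemma trace_square_2:
  fixes M :: "'a::comm_ring_1^2^2"
  shows "trace (M ** M) = trace M ^ 2 - 2 * det M"
  by (simp add: trace_2 det_2 matrix_matrix_mult_def sum_2 power2_eq_square algebra_simps)

lemma trace_cube_2:
  fixes M :: "'a::comm_ring_1^2^2"
  shows "trace (M ** M ** M) = trace M ^ 3 - 3 * det M * trace M"
  unfolding trace_mult_square_2 trace_square_2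
  by (simp add: algebra_simps power2_eq_square power3_eq_cube)

lemma trace_difference_ge_2:
  fixes a b c :: int
  assumes "2 \<le> a" "a < b" "b\<^sup>2 - 2 < c"
  shows "\<bar>(c ^ 3 - 3 * c) - ((b * c - a)\<^sup>2 - 2)\<bar> \<ge> 2"
proof -
  define D where "D = (c ^ 3 - 3 * c) - ((b * c - a)\<^sup>2 - 2)"
  have D_eq: "D = c\<^sup>2 * (c - b\<^sup>2) + c * (2 * a * b - 3) + 2 - a\<^sup>2"
    unfolding D_def by algebra
  have a_sq: "4 \<le> a\<^sup>2" using power_mono[of 2 a 2] assms(1) by simp
  have sq_less: "a\<^sup>2 < b\<^sup>2" using assms(1,2) by (simp add: power_strict_mono)
  have "\<bar>D\<bar> \<ge> 2"
  proof (cases "b\<^sup>2 \<le> c")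
    case True
    have "6 \<le> a * b" using mult_mono[of 2 a 3 b] assms(1,2) by simp
    moreover have "0 \<le> c" using True zero_le_power2[of b] by linarith
    ultimately have "c \<le> c * (2 * a * b - 3)"
      using mult_left_mono[of 1 "2 * a * b - 3" c] by simp
    moreover have "0 \<le> c\<^sup>2 * (c - b\<^sup>2)" using True by simp
    ultimately have "c + 2 - a\<^sup>2 \<le> D" unfolding D_eq by linarith
    then show ?thesis using True sq_less by simp
  next
    case False
    then have c: "c = b\<^sup>2 - 1" using assms(3) by simp
    define m where "m = 2 * a * b - b\<^sup>2 - 2"
    have D_m: "D = c * m + 2 - a\<^sup>2" unfolding D_eq m_def c by algebra
    have "0 \<le> c" using c sq_less a_sq by linarith
    consider "m = 0" | "1 \<le> m" | "m \<le> -1" by linarith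
    then show ?thesis
    proof cases
      case 1
      then show ?thesis using D_m a_sq by simp
    next
      case 2
      then have "c \<le> c * m" using \<open>0 \<le> c\<close> mult_left_mono[of 1 m c] by simp
      then show ?thesis using D_m c sq_less by simp
    next
      case 3
      then have "c * m \<le> - c" using \<open>0 \<le> c\<close> mult_left_mono[of m "-1" c] by simp
      then show ?thesis using D_m c sq_less a_sq by simp
    qed
  qed
  then show ?thesis unfolding D_def .
qed

theorem lemma7p1:
  fixes A B :: "int^2^2"
  assumes "det A = 1" and "det B = 1"
    and "A ** B \<noteq> B ** A"
    and "well_oriented (rmat A) (rmat B)"
    and "2 \<le> trace A" and "trace A < trace B"
    and "trace (A ** B) > trace (B ** B)"
  shows "\<bar>trace (A ** B ** A ** B ** A ** B) - trace (A ** B ** B ** A ** B ** B)\<bar> \<ge> 2"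
proof -
  have "det (A ** B) = 1" "det (A ** B ** B) = 1"
    using assms(1,2) by (simp_all add: det_mul)
  then have "trace (A ** B ** A ** B ** A ** B) = trace (A ** B) ^ 3 - 3 * trace (A ** B)"
    and "trace (A ** B ** B ** A ** B ** B) = (trace B * trace (A ** B) - trace A)\<^sup>2 - 2"
    using trace_cube_2[of "A ** B"] trace_square_2[of "A ** B ** B"]
      trace_mult_square_2[of A B] assms(2)
    by (simp_all add: matrix_mul_assoc)
  moreover have "trace (B ** B) = trace B ^ 2 - 2"
    using trace_square_2[of B] assms(2) by simp
  ultimately show ?thesis
    using trace_difference_ge_2[of "trace A" "trace B" "trace (A ** B)"] assms(5-7) by simp
qed

end
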